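(* For every fan $F$ there is a homomorphism $c:F\to T_7$ such that $c(r(F))=0$, $c(fl(F))\neq 0$ and $c(ll(F))\neq 0$.
   Context: $T_7$ is the tournament with vertex set $\{0,1,\dots,6\}$ in which $(i,j)$ is an arc if and only if $j-i\equiv 1,2,$ or $4 \pmod 7$. A homomorphism $c:F\to T_7$ of an oriented graph $F$ is a map on vertices such that $(c(u),c(v))$ is an arc of $T_7$ whenever $(u,v)$ is an arc of $F$. A fan $F$ is an oriented planar graph consisting of an oriented rooted plane tree (children of each vertex linearly ordered, as given by the planar embedding) with root $r=r(F)$, whose leaves (the vertices other than the root with no children), listed in left-to-right order, are $x_1,\dots,x_m$ ($m\ge 1$), together with, for each $1\le i\le m-1$, one arc between $x_i$ and $x_{i+1}$ (either $(x_i,x_{i+1})$ or $(x_{i+1},x_i)$). Write $fl(F)=x_1$ and $ll(F)=x_m$. *)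

theory Defs
  imports Main
begin

definition T7_arc :: "int \<Rightarrow> int \<Rightarrow> bool" where
  "T7_arc i j \<longleftrightarrow> i \<in> {0..6} \<and> j \<in> {0..6} \<and> (j - i) mod 7 \<in> {1, 2, 4}"

text \<open>A node carries the ordered list of its children;
  each child comes with a flag giving the orientation of the edge to it:
  True means the arc goes parent -> child, False means child -> parent.
  Vertices are identified with their positions (paths of child indices from the root);
  the root is the empty path.\<close>
datatype ptree = PNode "(bool \<times> ptree) list"

lemma ptree_zip_size:
  assumes "(i, b, t) \<in> set (zip xs cs)"
  shows "size t < Suc (size_list (size_prod (\<lambda>x. 0) size) cs)"
proof -
  from assms have "(b, t) \<in> set cs" by (meson set_zip_rightD)
  then have "size_prod (\<lambda>x. 0) size (b, t) \<le> size_list (size_prod (\<lambda>x. 0) size) cs"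
    by (rule size_list_estimation') simp
  then show ?thesis by simp
qed

function tarcs :: "ptree \<Rightarrow> (nat list \<times> nat list) set" where
  "tarcs (PNode cs) =
     (\<Union>(i, (b, t)) \<in> set (zip [0..<length cs] cs).
        {if b then ([], [i]) else ([i], [])} \<union> (\<lambda>(u, v). (i # u, i # v)) ` tarcs t)"
  by pat_completeness auto
termination by (relation "measure size") (auto dest: ptree_zip_size)

function leaves_below :: "ptree \<Rightarrow> nat list list" where
  "leaves_below (PNode cs) = (if cs = [] then [[]] else
     concat (map (\<lambda>(i, (b, t)). map (Cons i) (leaves_below t)) (zip [0..<length cs] cs)))"
  by pat_completeness auto
termination by (relation "measure size") (auto dest!: ptree_zip_size)

definition tree_leaves :: "ptree \<Rightarrow> nat list list" where
  "tree_leaves t = (case t of PNode [] \<Rightarrow> [] | _ \<Rightarrow> leaves_below t)"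

text \<open>A fan is given by a tree t and a list ds of orientations of the arcs between
  consecutive leaves: ds ! i = True means the arc (x_i, x_{i+1}), otherwise (x_{i+1}, x_i).\<close>
definition is_fan :: "ptree \<Rightarrow> bool list \<Rightarrow> bool" where
  "is_fan t ds \<longleftrightarrow> tree_leaves t \<noteq> [] \<and> length ds = length (tree_leaves t) - 1"

definition fan_arcs :: "ptree \<Rightarrow> bool list \<Rightarrow> (nat list \<times> nat list) set" where
  "fan_arcs t ds = tarcs t \<union>
     {if ds ! i then (tree_leaves t ! i, tree_leaves t ! Suc i)
      else (tree_leaves t ! Suc i, tree_leaves t ! i) | i. i < length ds}"

definition fan_root :: "nat list" where "fan_root = []"
definition fl :: "ptree \<Rightarrow> nat list" where "fl t = hd (tree_leaves t)"
definition ll :: "ptree \<Rightarrow> nat list" where "ll t = last (tree_leaves t)"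

definition is_hom_T7 :: "(nat list \<times> nat list) set \<Rightarrow> (nat list \<Rightarrow> int) \<Rightarrow> bool" where
  "is_hom_T7 A c \<longleftrightarrow> (\<forall>(u, v) \<in> A. T7_arc (c u) (c v))"

end

theory Submission
  imports Defs
begin

text \<open>At a vertex with children, colour the subtrees of the children
  one after another from left to right. A subtree that is not a single leaf has, by induction, a
  colouring with root 0 and both extreme leaves nonzero. Since x \<mapsto> y + \<alpha> x with \<alpha> \<in> {1, 2, 4}
  (the nonzero squares mod 7) is an automorphism of T_7, this colouring can be moved so that the
  root of the subtree is joined to 0 as its edge to the parent requires, its first leaf is joined
  to the last leaf coloured so far as the fan arc between them requires, and its extreme leaves
  stay nonzero; that a suitable automorphism always exists is a finite check. A subtree that is
  a single leaf only needs a common neighbour of 0 and the previous leaf.\<close>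

definition T7_arc_dir :: "bool \<Rightarrow> int \<Rightarrow> int \<Rightarrow> bool" where
  "T7_arc_dir b u v \<longleftrightarrow> (if b then T7_arc u v else T7_arc v u)"

lemma T7_arc_dir_neq: "T7_arc_dir b u v \<Longrightarrow> u \<noteq> v"
  by (auto simp: T7_arc_dir_def T7_arc_def)

lemma T7_arc_affine:
  assumes "T7_arc u v" and "\<alpha> \<in> {1, 2, 4}"
  shows "T7_arc ((y + \<alpha> * u) mod 7) ((y + \<alpha> * v) mod 7)"
proof -
  have "((y + \<alpha> * v) mod 7 - (y + \<alpha> * u) mod 7) mod 7 = (\<alpha> * (v - u)) mod 7"
    by (simp add: mod_diff_eq algebra_simps)
  also have "\<dots> = (\<alpha> * ((v - u) mod 7)) mod 7"
    by (simp add: mod_mult_right_eq)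
  finally show ?thesis
    using assms by (auto simp: T7_arc_def)
qed

lemma T7_affine_placement:
  assumes "L \<in> {1..6}" and "a \<in> {1..6}" and "b \<in> {1..6}"
  shows "\<exists>y\<in>{0..6}. \<exists>\<alpha>\<in>{1, 2, 4}. T7_arc_dir e 0 y \<and> T7_arc_dir d L ((y + \<alpha> * a) mod 7)
           \<and> (y + \<alpha> * a) mod 7 \<noteq> 0 \<and> (y + \<alpha> * b) mod 7 \<noteq> 0"
proof -
  have table: "\<forall>e\<in>{True, False}. \<forall>d\<in>{True, False}.
      \<forall>L\<in>{1, 2, 3, 4, 5, 6}. \<forall>a\<in>{1, 2, 3, 4, 5, 6}. \<forall>b\<in>{1, 2, 3, 4, 5, 6}.
      \<exists>y\<in>{0, 1, 2, 3, 4, 5, 6::int}. \<exists>\<alpha>\<in>{1, 2, 4}. T7_arc_dir e 0 y \<and> T7_arc_dir d L ((y + \<alpha> * a) mod 7)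
        \<and> (y + \<alpha> * a) mod 7 \<noteq> 0 \<and> (y + \<alpha> * b) mod 7 \<noteq> 0"
    by (simp add: T7_arc_dir_def T7_arc_def)
  have "L \<in> {1, 2, 3, 4, 5, 6}" and "a \<in> {1, 2, 3, 4, 5, 6}" and "b \<in> {1, 2, 3, 4, 5, 6}"
    using assms by auto
  then obtain y \<alpha> where "y \<in> {0, 1, 2, 3, 4, 5, 6}" and "\<alpha> \<in> {1, 2, 4}"
    and "T7_arc_dir e 0 y \<and> T7_arc_dir d L ((y + \<alpha> * a) mod 7)
         \<and> (y + \<alpha> * a) mod 7 \<noteq> 0 \<and> (y + \<alpha> * b) mod 7 \<noteq> 0"
    using table[rule_format, of e d L a b] by blast
  moreover have "{0, 1, 2, 3, 4, 5, 6} \<subseteq> {0..6::int}"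
    by auto
  ultimately show ?thesis
    by blast
qed

lemma T7_common_neighbour:
  assumes "L \<in> {1..6}"
  shows "\<exists>y\<in>{0..6}. T7_arc_dir e 0 y \<and> T7_arc_dir d L y"
proof -
  have table: "\<forall>e\<in>{True, False}. \<forall>d\<in>{True, False}. \<forall>L\<in>{1, 2, 3, 4, 5, 6}.
      \<exists>y\<in>{0, 1, 2, 3, 4, 5, 6::int}. T7_arc_dir e 0 y \<and> T7_arc_dir d L y"
    by (simp add: T7_arc_dir_def T7_arc_def)
  have "L \<in> {1, 2, 3, 4, 5, 6}"
    using assms by auto
  then obtain y where "y \<in> {0, 1, 2, 3, 4, 5, 6}" and "T7_arc_dir e 0 y \<and> T7_arc_dir d L y"
    using table[rule_format, of e d L] by blast
  moreover have "{0, 1, 2, 3, 4, 5, 6} \<subseteq> {0..6::int}"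
    by auto
  ultimately show ?thesis
    by blast
qed

lemma is_hom_T7_Un [simp]: "is_hom_T7 (A \<union> B) c \<longleftrightarrow> is_hom_T7 A c \<and> is_hom_T7 B c"
  by (auto simp: is_hom_T7_def)

lemma is_hom_T7_oriented_arc [simp]:
  "is_hom_T7 {if b then (u, v) else (v, u)} c \<longleftrightarrow> T7_arc_dir b (c u) (c v)"
  by (simp add: is_hom_T7_def T7_arc_dir_def)

lemma is_hom_T7_empty [simp]: "is_hom_T7 {} c"
  by (simp add: is_hom_T7_def)

lemma is_hom_T7_mono: "is_hom_T7 B c \<Longrightarrow> A \<subseteq> B \<Longrightarrow> is_hom_T7 A c"
  by (auto simp: is_hom_T7_def)

lemma is_hom_T7_cong:
  "is_hom_T7 A c \<Longrightarrow> (\<And>u v. (u, v) \<in> A \<Longrightarrow> c' u = c u \<and> c' v = c v) \<Longrightarrow> is_hom_T7 A c'"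
  by (fastforce simp: is_hom_T7_def)

lemma is_hom_T7_image:
  "is_hom_T7 ((\<lambda>(u, v). (f u, f v)) ` A) c \<longleftrightarrow> is_hom_T7 A (c \<circ> f)"
  by (auto simp: is_hom_T7_def)

lemma is_hom_T7_affine:
  "is_hom_T7 A c \<Longrightarrow> \<alpha> \<in> {1, 2, 4} \<Longrightarrow> is_hom_T7 A (\<lambda>u. (y + \<alpha> * c u) mod 7)"
  by (auto simp: is_hom_T7_def intro: T7_arc_affine)

definition path_arcs :: "'a list \<Rightarrow> bool list \<Rightarrow> ('a \<times> 'a) set" where
  "path_arcs xs ds = (\<lambda>i. if ds ! i then (xs ! i, xs ! Suc i) else (xs ! Suc i, xs ! i)) ` {..<length ds}"

lemma path_arcs_Nil [simp]: "path_arcs xs [] = {}"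
  by (simp add: path_arcs_def)

lemma path_arcs_vertices:
  assumes "(u, v) \<in> path_arcs xs ds" and "length ds = length xs - 1"
  shows "u \<in> set xs \<and> v \<in> set xs"
  using assms by (auto simp: path_arcs_def split: if_splits)

lemma path_arcs_map:
  assumes "length ds = length xs - 1"
  shows "path_arcs (map f xs) ds = (\<lambda>(u, v). (f u, f v)) ` path_arcs xs ds"
  using assms unfolding path_arcs_def image_image by (intro image_cong) auto

lemma path_arcs_append_subset:
  assumes "xs \<noteq> []" and "ys \<noteq> []" and "length ds = length xs - 1" and "length ds' = length ys - 1"
  shows "path_arcs (xs @ ys) (ds @ d # ds')
    \<subseteq> path_arcs xs ds \<union> {if d then (last xs, hd ys) else (hd ys, last xs)} \<union> path_arcs ys ds'"
proof
  fix p assume "p \<in> path_arcs (xs @ ys) (ds @ d # ds')"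
  then obtain i where i: "i < Suc (length ds + length ds')" and p:
    "p = (if (ds @ d # ds') ! i then ((xs @ ys) ! i, (xs @ ys) ! Suc i)
          else ((xs @ ys) ! Suc i, (xs @ ys) ! i))"
    by (auto simp: path_arcs_def)
  have xs_len: "length xs = Suc (length ds)"
    using assms(1,3) by (cases xs) auto
  consider "i < length ds" | "i = length ds" | j where "i = Suc (length ds + j)" "j < length ds'"
    using i by (metis add_Suc less_Suc_eq less_add_Suc1 not_less_iff_gr_or_eq less_imp_Suc_add nat_add_left_cancel_less)
  then show "p \<in> path_arcs xs ds \<union> {if d then (last xs, hd ys) else (hd ys, last xs)} \<union> path_arcs ys ds'"
  proof cases
    case 1
    then show ?thesis
      using p xs_len by (auto simp: path_arcs_def nth_append)
  next
    case 2
    then show ?thesis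
      using p xs_len assms(1,2) by (simp add: nth_append last_conv_nth hd_conv_nth)
  next
    case 3
    then show ?thesis
      using p xs_len by (auto simp: path_arcs_def nth_append)
  qed
qed

declare leaves_below.simps [simp del] tarcs.simps [simp del]

lemma tarcs_Nil [simp]: "tarcs (PNode []) = {}"
  by (simp add: tarcs.simps)

lemma leaves_below_Nil [simp]: "leaves_below (PNode []) = [[]]"
  by (simp add: leaves_below.simps)

lemma leaves_below_snoc:
  "cs \<noteq> [] \<Longrightarrow> leaves_below (PNode (cs @ [(e, t)]))
     = leaves_below (PNode cs) @ map (Cons (length cs)) (leaves_below t)"
  by (simp add: leaves_below.simps)

lemma leaves_below_single: "leaves_below (PNode [(e, t)]) = map (Cons 0) (leaves_below t)"
  by (simp add: leaves_below.simps)

lemma leaves_below_nonempty: "leaves_below t \<noteq> []"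
proof (induction t rule: leaves_below.induct)
  case (1 cs)
  show ?case
  proof (cases cs rule: rev_cases)
    case Nil
    then show ?thesis
      by (simp add: leaves_below.simps)
  next
    case (snoc cs' x)
    obtain e t where x: "x = (e, t)"
      by fastforce
    have "(length cs', e, t) \<in> set (zip [0..<length cs] cs)"
      using snoc x by (simp add: zip_append)
    then have "leaves_below t \<noteq> []"
      using "1" snoc by blast
    then show ?thesis
      using snoc x by (cases "cs' = []") (simp_all add: leaves_below_snoc leaves_below_single)
  qed
qed

lemma leaves_below_hd_less:
  "cs \<noteq> [] \<Longrightarrow> u \<in> set (leaves_below (PNode cs)) \<Longrightarrow> u \<noteq> [] \<and> hd u < length cs"
  by (auto simp: leaves_below.simps set_zip)

lemma tarcs_snoc:
  "tarcs (PNode (cs @ [(e, t)])) = tarcs (PNode cs) \<union> {if e then ([], [length cs]) else ([length cs], [])}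
     \<union> (\<lambda>(u, v). (length cs # u, length cs # v)) ` tarcs t"
  by (auto simp: tarcs.simps)

lemma tarcs_hd_less:
  "(u, v) \<in> tarcs (PNode cs) \<Longrightarrow> (u = [] \<or> hd u < length cs) \<and> (v = [] \<or> hd v < length cs)"
  by (auto simp: tarcs.simps set_zip split: if_splits)

definition graft :: "(nat list \<Rightarrow> 'a) \<Rightarrow> nat \<Rightarrow> (nat list \<Rightarrow> 'a) \<Rightarrow> nat list \<Rightarrow> 'a" where
  "graft c n h u = (if u \<noteq> [] \<and> hd u = n then h (tl u) else c u)"

lemma graft_Cons_self [simp]: "graft c n h (n # u) = h u"
  by (simp add: graft_def)

lemma graft_Nil [simp]: "graft c n h [] = c []"
  by (simp add: graft_def)

lemma graft_hd_less: "u = [] \<or> hd u < n \<Longrightarrow> graft c n h u = c u"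
  by (auto simp: graft_def)

lemma graft_comp_Cons [simp]: "graft c n h \<circ> Cons n = h"
  by (simp add: fun_eq_iff)

lemma range_graft: "range c \<subseteq> A \<Longrightarrow> range h \<subseteq> A \<Longrightarrow> range (graft c n h) \<subseteq> A"
  by (auto simp: graft_def)

lemma is_hom_T7_tarcs_graft:
  assumes "is_hom_T7 (tarcs (PNode cs)) c" and "is_hom_T7 (tarcs t) h" and "T7_arc_dir e (c []) (h [])"
  shows "is_hom_T7 (tarcs (PNode (cs @ [(e, t)]))) (graft c (length cs) h)"
proof -
  have "is_hom_T7 (tarcs (PNode cs)) (graft c (length cs) h)"
    using assms(1) by (rule is_hom_T7_cong) (auto dest!: tarcs_hd_less intro: graft_hd_less)
  then show ?thesis
    using assms(2,3) unfolding tarcs_snoc is_hom_T7_Un by (simp add: is_hom_T7_image)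
qed

lemma is_hom_T7_path_arcs_graft:
  assumes "cs \<noteq> []"
    and "length ds = length (leaves_below (PNode cs)) - 1" and "length ds' = length (leaves_below t) - 1"
    and "is_hom_T7 (path_arcs (leaves_below (PNode cs)) ds) c"
    and "is_hom_T7 (path_arcs (leaves_below t) ds') h"
    and "T7_arc_dir d (c (last (leaves_below (PNode cs)))) (h (hd (leaves_below t)))"
  shows "is_hom_T7 (path_arcs (leaves_below (PNode (cs @ [(e, t)]))) (ds @ d # ds')) (graft c (length cs) h)"
proof -
  let ?c = "graft c (length cs) h"
  let ?xs = "leaves_below (PNode cs)" and ?ys = "map (Cons (length cs)) (leaves_below t)"
  have agree: "?c u = c u" if "u \<in> set ?xs" for u
    using leaves_below_hd_less[OF assms(1) that] by (simp add: graft_hd_less)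
  have left: "is_hom_T7 (path_arcs ?xs ds) ?c"
    using assms(4) by (rule is_hom_T7_cong) (auto dest!: path_arcs_vertices[OF _ assms(2)] simp: agree)
  have right: "is_hom_T7 (path_arcs ?ys ds') ?c"
    using assms(3,5) by (simp add: path_arcs_map is_hom_T7_image)
  have "T7_arc_dir d (?c (last ?xs)) (?c (hd ?ys))"
    using assms(6) agree leaves_below_nonempty[of t] leaves_below_nonempty[of "PNode cs"]
    by (simp add: hd_map)
  then have link: "is_hom_T7 {if d then (last ?xs, hd ?ys) else (hd ?ys, last ?xs)} ?c"
    by (simp only: is_hom_T7_oriented_arc)
  have "path_arcs (?xs @ ?ys) (ds @ d # ds')
      \<subseteq> path_arcs ?xs ds \<union> {if d then (last ?xs, hd ?ys) else (hd ?ys, last ?xs)} \<union> path_arcs ?ys ds'"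
    by (rule path_arcs_append_subset) (use assms(2,3) leaves_below_nonempty in simp_all)
  then show ?thesis
    unfolding leaves_below_snoc[OF assms(1)]
    by (rule is_hom_T7_mono[rotated]) (simp only: is_hom_T7_Un left right link)
qed

definition fan_colouring :: "ptree \<Rightarrow> bool list \<Rightarrow> (nat list \<Rightarrow> int) \<Rightarrow> bool" where
  "fan_colouring t ds c \<longleftrightarrow> is_hom_T7 (tarcs t \<union> path_arcs (leaves_below t) ds) c \<and> range c \<subseteq> {0..6}
     \<and> c [] = 0 \<and> c (hd (leaves_below t)) \<noteq> 0 \<and> c (last (leaves_below t)) \<noteq> 0"

lemma fan_colouring_extreme_leaves:
  assumes "fan_colouring t ds c"
  shows "c (hd (leaves_below t)) \<in> {1..6}" and "c (last (leaves_below t)) \<in> {1..6}"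
proof -
  have "c u \<in> {0..6}" for u
    using assms unfolding fan_colouring_def by blast
  then show "c (hd (leaves_below t)) \<in> {1..6}" and "c (last (leaves_below t)) \<in> {1..6}"
    using assms unfolding fan_colouring_def by (metis atLeastAtMost_iff int_one_le_iff_zero_less order_le_less)+
qed

lemma subtree_colouring:
  assumes colouring: "t \<noteq> PNode [] \<Longrightarrow> \<exists>c. fan_colouring t ds c"
    and "L \<in> {1..6}" and ds: "length ds = length (leaves_below t) - 1"
  shows "\<exists>h. is_hom_T7 (tarcs t \<union> path_arcs (leaves_below t) ds) h \<and> range h \<subseteq> {0..6}
    \<and> T7_arc_dir e 0 (h []) \<and> T7_arc_dir d L (h (hd (leaves_below t)))
    \<and> h (hd (leaves_below t)) \<noteq> 0 \<and> h (last (leaves_below t)) \<noteq> 0"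
proof (cases "t = PNode []")
  case True
  obtain y where y: "y \<in> {0..6}" "T7_arc_dir e 0 y" "T7_arc_dir d L y"
    using T7_common_neighbour[OF assms(2)] by blast
  moreover have "y \<noteq> 0"
    using T7_arc_dir_neq[OF y(2)] by simp
  ultimately show ?thesis
    using True ds by (intro exI[of _ "\<lambda>_. y"]) auto
next
  case False
  then obtain c where c: "fan_colouring t ds c"
    using colouring by blast
  let ?a = "c (hd (leaves_below t))" and ?b = "c (last (leaves_below t))"
  obtain y \<alpha> where y: "y \<in> {0..6}" and \<alpha>: "\<alpha> \<in> {1, 2, 4}"
    and placed: "T7_arc_dir e 0 y" "T7_arc_dir d L ((y + \<alpha> * ?a) mod 7)"
      "(y + \<alpha> * ?a) mod 7 \<noteq> 0" "(y + \<alpha> * ?b) mod 7 \<noteq> 0"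
    using T7_affine_placement[OF assms(2) fan_colouring_extreme_leaves[OF c]] by blast
  have "is_hom_T7 (tarcs t \<union> path_arcs (leaves_below t) ds) (\<lambda>u. (y + \<alpha> * c u) mod 7)"
    using c \<alpha> by (simp add: fan_colouring_def is_hom_T7_affine del: is_hom_T7_Un)
  moreover have "(y + \<alpha> * c []) mod 7 = y"
    using c y by (simp add: fan_colouring_def)
  ultimately show ?thesis
    using placed by (intro exI[of _ "\<lambda>u. (y + \<alpha> * c u) mod 7"]) auto
qed

lemma fan_colouring_single:
  assumes "is_hom_T7 (tarcs t \<union> path_arcs (leaves_below t) ds) h" and "range h \<subseteq> {0..6}"
    and "T7_arc_dir e 0 (h [])" and "h (hd (leaves_below t)) \<noteq> 0" and "h (last (leaves_below t)) \<noteq> 0"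
    and "length ds = length (leaves_below t) - 1"
  shows "fan_colouring (PNode [(e, t)]) ds (graft (\<lambda>_. 0) 0 h)"
proof -
  have "is_hom_T7 (tarcs (PNode [(e, t)])) (graft (\<lambda>_. 0) 0 h)"
    using is_hom_T7_tarcs_graft[of "[]" "\<lambda>_. 0" t h e] assms(1,3) by simp
  moreover have "is_hom_T7 (path_arcs (leaves_below (PNode [(e, t)])) ds) (graft (\<lambda>_. 0) 0 h)"
    using assms(1,6) by (simp add: leaves_below_single path_arcs_map is_hom_T7_image)
  moreover have "range (graft (\<lambda>_. 0) 0 h) \<subseteq> {0..6}"
    using assms(2) by (intro range_graft) auto
  ultimately show ?thesis
    using assms(4,5) leaves_below_nonempty[of t]
    by (simp add: fan_colouring_def leaves_below_single hd_map last_map)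
qed

lemma fan_colouring_graft:
  assumes "cs \<noteq> []" and c: "fan_colouring (PNode cs) ds c"
    and "length ds = length (leaves_below (PNode cs)) - 1" and "length ds' = length (leaves_below t) - 1"
    and "is_hom_T7 (tarcs t \<union> path_arcs (leaves_below t) ds') h" and "range h \<subseteq> {0..6}"
    and "T7_arc_dir e 0 (h [])" and "T7_arc_dir d (c (last (leaves_below (PNode cs)))) (h (hd (leaves_below t)))"
    and "h (last (leaves_below t)) \<noteq> 0"
  shows "fan_colouring (PNode (cs @ [(e, t)])) (ds @ d # ds') (graft c (length cs) h)"
proof -
  have "is_hom_T7 (tarcs (PNode (cs @ [(e, t)]))) (graft c (length cs) h)"
    using c assms(5,7) by (intro is_hom_T7_tarcs_graft) (simp_all add: fan_colouring_def)
  moreover have "is_hom_T7 (path_arcs (leaves_below (PNode (cs @ [(e, t)]))) (ds @ d # ds')) (graft c (length cs) h)"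
    using c assms(1,3-5,8) by (intro is_hom_T7_path_arcs_graft) (simp_all add: fan_colouring_def)
  moreover have "range (graft c (length cs) h) \<subseteq> {0..6}"
    using c assms(6) by (intro range_graft) (simp_all add: fan_colouring_def)
  moreover have "graft c (length cs) h (hd (leaves_below (PNode cs))) = c (hd (leaves_below (PNode cs)))"
    using leaves_below_hd_less[OF assms(1) hd_in_set[OF leaves_below_nonempty]] by (simp add: graft_hd_less)
  ultimately show ?thesis
    using c assms(1,9) leaves_below_nonempty[of t] leaves_below_nonempty[of "PNode cs"]
    by (simp add: fan_colouring_def leaves_below_snoc last_map)
qed

lemma fan_colouring_children:
  assumes "cs \<noteq> []"
    and "\<And>e t ds. (e, t) \<in> set cs \<Longrightarrow> t \<noteq> PNode [] \<Longrightarrow> length ds = length (leaves_below t) - 1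
           \<Longrightarrow> \<exists>c. fan_colouring t ds c"
    and "length ds = length (leaves_below (PNode cs)) - 1"
  shows "\<exists>c. fan_colouring (PNode cs) ds c"
  using assms
proof (induction cs arbitrary: ds rule: rev_nonempty_induct)
  case (single x)
  obtain e t where x: "x = (e, t)"
    by fastforce
  have ds: "length ds = length (leaves_below t) - 1"
    using single.prems(2) x by (simp add: leaves_below_single)
  have "t \<noteq> PNode [] \<Longrightarrow> \<exists>c. fan_colouring t ds c"
    using single.prems(1)[of e t ds] x ds by simp
  \<comment> \<open>A single child has no left neighbour: the constraint towards the label 1 is just discarded.\<close>
  from subtree_colouring[OF this _ ds, of 1 e True]
  obtain h where "is_hom_T7 (tarcs t \<union> path_arcs (leaves_below t) ds) h" "range h \<subseteq> {0..6}"
    "T7_arc_dir e 0 (h [])" "h (hd (leaves_below t)) \<noteq> 0" "h (last (leaves_below t)) \<noteq> 0"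
    by auto
  then show ?case
    using fan_colouring_single ds x by blast
next
  case (snoc x cs)
  obtain e t where x: "x = (e, t)"
    by fastforce
  let ?k = "length (leaves_below (PNode cs)) - 1"
  have "length (leaves_below (PNode (cs @ [x]))) = length (leaves_below (PNode cs)) + length (leaves_below t)"
    using snoc.hyps x by (simp add: leaves_below_snoc)
  moreover have "0 < length (leaves_below t)" and "0 < length (leaves_below (PNode cs))"
    using leaves_below_nonempty by auto
  ultimately have len: "length ds = Suc ?k + (length (leaves_below t) - 1)"
    using snoc.prems(2) by linarith
  obtain ds1 d ds2 where ds: "ds = ds1 @ d # ds2"
    and ds1: "length ds1 = ?k" and ds2: "length ds2 = length (leaves_below t) - 1"
    using len by (intro that[of "take ?k ds" "ds ! ?k" "drop (Suc ?k) ds"]) (simp_all add: id_take_nth_drop)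
  have "\<exists>c. fan_colouring (PNode cs) ds1 c"
    by (rule snoc.IH[OF _ ds1], rule snoc.prems(1)) auto
  then obtain c where c: "fan_colouring (PNode cs) ds1 c" ..
  have "t \<noteq> PNode [] \<Longrightarrow> \<exists>c. fan_colouring t ds2 c"
    using snoc.prems(1)[of e t ds2] x ds2 by simp
  from subtree_colouring[OF this fan_colouring_extreme_leaves(2)[OF c] ds2, of e d]
  obtain h where "is_hom_T7 (tarcs t \<union> path_arcs (leaves_below t) ds2) h" "range h \<subseteq> {0..6}"
    "T7_arc_dir e 0 (h [])" "T7_arc_dir d (c (last (leaves_below (PNode cs)))) (h (hd (leaves_below t)))"
    "h (last (leaves_below t)) \<noteq> 0"
    by blast
  then have "fan_colouring (PNode (cs @ [(e, t)])) (ds1 @ d # ds2) (graft c (length cs) h)"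
    using fan_colouring_graft[OF snoc.hyps c ds1 ds2] by blast
  then show ?case
    using ds x by blast
qed

lemma fan_colouring_exists:
  "t \<noteq> PNode [] \<Longrightarrow> length ds = length (leaves_below t) - 1 \<Longrightarrow> \<exists>c. fan_colouring t ds c"
proof (induction t arbitrary: ds rule: leaves_below.induct)
  case (1 cs)
  show ?case
  proof (rule fan_colouring_children)
    show "cs \<noteq> []"
      using "1.prems"(1) by simp
    show "length ds = length (leaves_below (PNode cs)) - 1"
      by (fact "1.prems"(2))
  next
    fix e t and ds' :: "bool list"
    assume child: "(e, t) \<in> set cs" and "t \<noteq> PNode []" and "length ds' = length (leaves_below t) - 1"
    obtain i where "i < length cs" and "cs ! i = (e, t)"
      using child by (meson in_set_conv_nth)
    then have "(i, e, t) \<in> set (zip [0..<length cs] cs)"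
      by (auto simp: in_set_zip intro!: exI[of _ i])
    then show "\<exists>c. fan_colouring t ds' c"
      using "1.IH" "1.prems"(1) \<open>t \<noteq> PNode []\<close> \<open>length ds' = length (leaves_below t) - 1\<close> by blast
  qed
qed

theorem lemma4:
  assumes "is_fan t ds"
  shows "\<exists>c. is_hom_T7 (fan_arcs t ds) c \<and> c fan_root = 0 \<and> c (fl t) \<noteq> 0 \<and> c (ll t) \<noteq> 0"
proof -
  have "t \<noteq> PNode []" and leaves: "tree_leaves t = leaves_below t"
    using assms by (auto simp: is_fan_def tree_leaves_def split: ptree.split list.split)
  then obtain c where "fan_colouring t ds c"
    using fan_colouring_exists assms by (auto simp: is_fan_def)
  moreover have "fan_arcs t ds = tarcs t \<union> path_arcs (leaves_below t) ds"
    by (auto simp: fan_arcs_def path_arcs_def leaves)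
  ultimately show ?thesis
    by (auto simp: fan_colouring_def fan_root_def fl_def ll_def leaves)
qed

end
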